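(* Let $q$ be a prime power, $m>4$, $F=\mathbb F_q$, $V=\mathbb F_q^m$. Let $E\subset E_1$ be subspaces of $\bigwedge^2V$ with $\dim E_1=\dim E+1$, and assume $E$ is decomposable of dimension $r\ge1$ and $E_1$ is not decomposable. Then $E_1\setminus E$ contains at most $q^{r-1}(q-1)$ decomposable elements.
   Context: A nonzero $\omega\in\bigwedge^2V$ is decomposable if $\omega=u\wedge v$ for some $u,v\in V$; a subspace of $\bigwedge^2V$ is decomposable if all its nonzero elements are decomposable. *)

theory Defs
  imports "HOL-Analysis.Analysis"
begin

text \<open>Model of the exterior square: V = F^n (n a finite index type, dim V = CARD('n)),
  V \<otimes> V = F^('n \<times> 'n), and u \<and> v = u \<otimes> v - v \<otimes> u.\<close>

definition wedge :: "'a::field ^ 'n::finite \<Rightarrow> 'a ^ 'n \<Rightarrow> 'a ^ ('n \<times> 'n)" where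
  "wedge u v = (\<chi> p. u $ fst p * v $ snd p - u $ snd p * v $ fst p)"

definition Wedge2 :: "('a::field ^ ('n::finite \<times> 'n)) set" where
  "Wedge2 = vec.span (range (\<lambda>(u, v). wedge u v))"

definition decomposable :: "'a::field ^ ('n::finite \<times> 'n) \<Rightarrow> bool" where
  "decomposable w \<longleftrightarrow> w \<noteq> 0 \<and> (\<exists>u v. w = wedge u v)"

definition decomposable_subspace :: "('a::field ^ ('n::finite \<times> 'n)) set \<Rightarrow> bool" where
  "decomposable_subspace E \<longleftrightarrow> (\<forall>w\<in>E. w \<noteq> 0 \<longrightarrow> decomposable w)"

end

theory Submission
  imports Defs
begin

text \<open>A nonzero w is decomposable iff all its Pl\<uu>cker quadrics vanish. Pick one quadric
  Q that does not vanish at some z \<in> E1, so that E1 = E \<oplus> Fz. Since Q vanishes on E,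
  Q(cz + e) = c (c Q(z) + B(e)) with B linear, so a decomposable element cz + e outside E
  (c \<noteq> 0) has c = -B(e)/Q(z): it is determined by its component e, which lies outside
  the hyperplane ker B of E. Hence there are at most q^r - q^(r-1) of them.\<close>

definition plucker :: "'a::field ^ ('n::finite \<times> 'n) \<Rightarrow> 'n \<Rightarrow> 'n \<Rightarrow> 'n \<Rightarrow> 'n \<Rightarrow> 'a" where
  "plucker x i j k l = x$(i,j) * x$(k,l) - x$(i,k) * x$(j,l) + x$(i,l) * x$(j,k)"

definition plucker_polar ::
    "'a::field ^ ('n::finite \<times> 'n) \<Rightarrow> 'a ^ ('n \<times> 'n) \<Rightarrow> 'n \<Rightarrow> 'n \<Rightarrow> 'n \<Rightarrow> 'n \<Rightarrow> 'a" where
  "plucker_polar z e i j k l =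
     z$(i,j) * e$(k,l) + e$(i,j) * z$(k,l) - z$(i,k) * e$(j,l) - e$(i,k) * z$(j,l)
     + z$(i,l) * e$(j,k) + e$(i,l) * z$(j,k)"

lemma plucker_wedge: "plucker (wedge u v) i j k l = 0"
  unfolding plucker_def wedge_def by (simp add: algebra_simps)

lemma plucker_scale_add:
  "plucker (c *s z + e) i j k l
     = c * c * plucker z i j k l + c * plucker_polar z e i j k l + plucker e i j k l"
  unfolding plucker_def plucker_polar_def by (simp add: algebra_simps)

lemma plucker_polar_add:
  "plucker_polar z (x + y) i j k l = plucker_polar z x i j k l + plucker_polar z y i j k l"
  unfolding plucker_polar_def by (simp add: algebra_simps)

lemma plucker_polar_scale: "plucker_polar z (c *s x) i j k l = c * plucker_polar z x i j k l"
  unfolding plucker_polar_def by (simp add: algebra_simps)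

lemma decomposable_iff_plucker:
  fixes x :: "'a::field ^ ('n::finite \<times> 'n)"
  shows "decomposable x \<longleftrightarrow> x \<noteq> 0 \<and> (\<forall>i j k l. plucker x i j k l = 0)"
proof
  assume "decomposable x"
  then show "x \<noteq> 0 \<and> (\<forall>i j k l. plucker x i j k l = 0)"
    unfolding decomposable_def using plucker_wedge by auto
next
  assume x: "x \<noteq> 0 \<and> (\<forall>i j k l. plucker x i j k l = 0)"
  then obtain a b where xab: "x$(a,b) \<noteq> 0" by (metis vec_eq_iff zero_index surj_pair)
  define u :: "'a^'n" where "u = (\<chi> i. x$(i,a))"
  define v :: "'a^'n" where "v = (\<chi> j. x$(j,b) / x$(a,b))"
  have "x$(i,j) = wedge u v $ (i,j)" for i j
  proof -
    have "plucker x i j a b = 0" using x by blast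
    then have "x$(i,j) * x$(a,b) = x$(i,a) * x$(j,b) - x$(i,b) * x$(j,a)"
      unfolding plucker_def by (simp add: algebra_simps)
    then show ?thesis
      unfolding wedge_def u_def v_def using xab by (simp add: field_simps)
  qed
  then have "x = wedge u v" by (simp add: vec_eq_iff)
  then show "decomposable x" using x unfolding decomposable_def by blast
qed

lemma card_span_insert:
  fixes S :: "('a::{finite,field} ^ 'm::finite) set"
  assumes b: "b \<notin> vec.span S"
  shows "card (vec.span (insert b S)) = CARD('a) * card (vec.span S)"
proof -
  have "inj_on (\<lambda>(c, x). c *s b + x) (UNIV \<times> vec.span S)"
  proof (rule inj_onI, clarsimp)
    fix c x c' x'
    assume x: "x \<in> vec.span S" and x': "x' \<in> vec.span S" and e: "c *s b + x = c' *s b + x'"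
    then have "(c - c') *s b = x' - x"
      by (simp add: algebra_simps vector_sadd_rdistrib vector_ssub_ldistrib)
    then have "(c - c') *s b \<in> vec.span S"
      using vec.span_diff[OF x' x] by simp
    have "c = c'"
    proof (rule ccontr)
      assume "c \<noteq> c'"
      then have "b = inverse (c - c') *s ((c - c') *s b)"
        by (metis right_minus_eq vec.scale_scale left_inverse vec.scale_one)
      also have "\<dots> \<in> vec.span S" using \<open>(c - c') *s b \<in> vec.span S\<close> by (rule vec.span_scale)
      finally show False using b by simp
    qed
    with e show "c = c' \<and> x = x'" by simp
  qed
  moreover have "(\<lambda>(c, x). c *s b + x) ` (UNIV \<times> vec.span S) = vec.span (insert b S)"
  proof
    show "(\<lambda>(c, x). c *s b + x) ` (UNIV \<times> vec.span S) \<subseteq> vec.span (insert b S)"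
    proof (clarsimp simp: vec.span_insert)
      fix c x assume "x \<in> vec.span S"
      then show "\<exists>k. c *s b + x - k *s b \<in> vec.span S" by (intro exI[of _ c]) simp
    qed
    show "vec.span (insert b S) \<subseteq> (\<lambda>(c, x). c *s b + x) ` (UNIV \<times> vec.span S)"
    proof
      fix y assume "y \<in> vec.span (insert b S)"
      then obtain k where "y - k *s b \<in> vec.span S" by (auto simp: vec.span_insert)
      then show "y \<in> (\<lambda>(c, x). c *s b + x) ` (UNIV \<times> vec.span S)"
        by (intro image_eqI[of _ _ "(k, y - k *s b)"]) auto
    qed
  qed
  ultimately have "bij_betw (\<lambda>(c, x). c *s b + x) (UNIV \<times> vec.span S) (vec.span (insert b S))"
    by (simp add: bij_betw_def)
  then show ?thesis by (simp add: bij_betw_same_card[symmetric] card_cartesian_product)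
qed

lemma card_span_independent:
  fixes B :: "('a::{finite,field} ^ 'm::finite) set"
  assumes "finite B" "vec.independent B"
  shows "card (vec.span B) = CARD('a) ^ card B"
  using assms
proof (induction B rule: finite_induct)
  case (insert b B)
  then have "b \<notin> vec.span B" "vec.independent B"
    by (simp_all add: vec.independent_insert)
  with insert show ?case by (simp add: card_span_insert)
qed simp

lemma card_subspace:
  fixes E :: "('a::{finite,field} ^ 'm::finite) set"
  assumes "vec.subspace E"
  shows "card E = CARD('a) ^ vec.dim E"
proof -
  obtain B where B: "B \<subseteq> E" "vec.independent B" "E \<subseteq> vec.span B" "card B = vec.dim E"
    using vec.basis_exists by blast
  then have "vec.span B = E" using assms vec.span_minimal by blast
  with B show ?thesis using card_span_independent vec.finiteI_independent by metis
qed

lemma card_nonvanishing_linear_functional: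
  fixes E :: "('a::{finite,field} ^ 'm::finite) set"
  assumes E: "vec.subspace E"
    and f_add: "\<And>x y. f (x + y) = f x + f y"
    and f_scale: "\<And>c x. f (c *s x) = c * f x"
  shows "card {e \<in> E. f e \<noteq> 0} \<le> CARD('a) ^ (vec.dim E - 1) * (CARD('a) - 1)"
proof (cases "\<exists>e0\<in>E. f e0 \<noteq> 0")
  case True
  then obtain e0 where e0: "e0 \<in> E" "f e0 \<noteq> 0" by blast
  define K where "K = {e \<in> E. f e = 0}"
  have f_zero: "f 0 = 0" using f_scale[of 0 0] by simp
  have f_diff: "f (x - y) = f x - f y" for x y
    using f_add[of "x - y" y] by simp
  have K: "vec.subspace K"
    using E f_add f_scale f_zero unfolding K_def vec.subspace_def by auto
  have span_K: "vec.span K = K" using K by (simp only: vec.span_eq_iff)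
  have E_eq: "E = vec.span (insert e0 K)"
  proof
    show "E \<subseteq> vec.span (insert e0 K)"
    proof
      fix y assume "y \<in> E"
      then have "y - (f y / f e0) *s e0 \<in> K"
        using e0 E unfolding K_def by (simp add: vec.subspace_diff vec.subspace_scale f_diff f_scale)
      then show "y \<in> vec.span (insert e0 K)"
        unfolding vec.span_insert span_K by blast
    qed
    show "vec.span (insert e0 K) \<subseteq> E"
      using E e0 by (intro vec.span_minimal) (auto simp: K_def)
  qed
  have "e0 \<notin> K" using e0 unfolding K_def by simp
  then have card_E: "card E = CARD('a) * card K"
    using card_span_insert[of e0 K] unfolding span_K E_eq[symmetric] by simp
  have "{e \<in> E. f e \<noteq> 0} = E - K" unfolding K_def by auto
  then have "card {e \<in> E. f e \<noteq> 0} = card E - card K"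
    by (simp add: card_Diff_subset K_def)
  also have "\<dots> = (CARD('a) - 1) * card K"
    using card_E by (simp add: diff_mult_distrib)
  also have "\<dots> \<le> CARD('a) ^ (vec.dim E - 1) * (CARD('a) - 1)"
  proof (cases "vec.dim E")
    case 0
    then have "card E = 1" by (simp only: card_subspace[OF E] power_0)
    then have "CARD('a) = 1" using card_E by simp
    then show ?thesis by simp
  next
    case (Suc d)
    then have "card K = CARD('a) ^ d" using card_E card_subspace[OF E] by simp
    then show ?thesis using Suc by simp
  qed
  finally show ?thesis .
next
  case False
  then have "{e \<in> E. f e \<noteq> 0} = {}" by blast
  then show ?thesis by (metis card.empty zero_le)
qed

lemma subspace_eq_span_insert:
  assumes "vec.subspace E" "vec.subspace E1" "E \<subseteq> E1"
    and "vec.dim E1 = vec.dim E + 1" "z \<in> E1" "z \<notin> E"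
  shows "E1 = vec.span (insert z E)"
proof
  show "vec.span (insert z E) \<subseteq> E1" using assms vec.span_minimal by blast
  have span_E: "vec.span E = E" using assms by simp
  have "vec.dim (insert z E) = vec.dim E1" using assms vec.dim_insert[of z E] by (simp add: span_E)
  then show "E1 \<subseteq> vec.span (insert z E)"
    using vec.dim_eq_span[of "insert z E" E1] assms vec.span_superset[of E1] by simp
qed

lemma card_quadric_zeros_outside:
  fixes E :: "('a::{finite,field} ^ 'm::finite) set"
  assumes E: "vec.subspace E" and z: "z \<notin> E"
    and Q_expand: "\<And>c e. Q (c *s z + e) = c * c * Q z + c * B e + Q e"
    and Qz: "Q z \<noteq> 0" and QE: "\<And>e. e \<in> E \<Longrightarrow> Q e = 0"
  shows "card {x \<in> vec.span (insert z E) - E. Q x = 0} \<le> card {e \<in> E. B e \<noteq> 0}"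
proof -
  let ?param = "\<lambda>e. (- B e / Q z) *s z + e"
  have span_E: "vec.span E = E" using E by simp
  have "{x \<in> vec.span (insert z E) - E. Q x = 0} \<subseteq> ?param ` {e \<in> E. B e \<noteq> 0}"
  proof clarify
    fix x assume x: "x \<in> vec.span (insert z E)" "x \<notin> E" "Q x = 0"
    then obtain c where "x - c *s z \<in> E" using span_E by (auto simp: vec.span_insert)
    then obtain e where e: "e \<in> E" and x_eq: "x = c *s z + e"
      by (metis add.commute diff_add_cancel)
    have "c \<noteq> 0" using x e x_eq by auto
    moreover have "c * (c * Q z + B e) = 0"
      using x Q_expand[of c e] QE[OF e] x_eq by (simp add: algebra_simps)
    ultimately have "c * Q z = - B e" by (simp add: eq_neg_iff_add_eq_0)
    with \<open>c \<noteq> 0\<close> Qz have "c = - B e / Q z" "B e \<noteq> 0"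
      by (auto simp: field_simps)
    then show "x \<in> ?param ` {e \<in> E. B e \<noteq> 0}"
      using e x_eq by (intro image_eqI[of _ _ e]) auto
  qed
  then have "card {x \<in> vec.span (insert z E) - E. Q x = 0} \<le> card (?param ` {e \<in> E. B e \<noteq> 0})"
    by (rule card_mono[rotated]) simp
  also have "\<dots> \<le> card {e \<in> E. B e \<noteq> 0}"
    by (rule card_image_le) simp
  finally show ?thesis .
qed

theorem lemma6p4:
  fixes E E1 :: "('a::{finite,field} ^ ('n::finite \<times> 'n)) set"
    and r :: nat
  assumes m: "CARD('n) > 4"
    and E_sub: "vec.subspace E" and E1_sub: "vec.subspace E1"
    and E_W: "E \<subseteq> Wedge2" and E1_W: "E1 \<subseteq> Wedge2"
    and EE1: "E \<subseteq> E1"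
    and dimE1: "vec.dim E1 = vec.dim E + 1"
    and dimE: "vec.dim E = r" and r: "r \<ge> 1"
    and decE: "decomposable_subspace E"
    and ndecE1: "\<not> decomposable_subspace E1"
  shows "card {w \<in> E1 - E. decomposable w} \<le> CARD('a) ^ (r - 1) * (CARD('a) - 1)"
proof -
  obtain z where z: "z \<in> E1" "z \<noteq> 0" "\<not> decomposable z"
    using ndecE1 unfolding decomposable_subspace_def by blast
  then obtain i j k l where Qz: "plucker z i j k l \<noteq> 0"
    using decomposable_iff_plucker by blast
  have "z \<notin> E" using decE z unfolding decomposable_subspace_def by blast
  then have E1_eq: "E1 = vec.span (insert z E)"
    using subspace_eq_span_insert E_sub E1_sub EE1 dimE1 z by blast
  have QE: "plucker e i j k l = 0" if "e \<in> E" for e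
    using decE that decomposable_iff_plucker[of e] unfolding decomposable_subspace_def
    by (cases "e = 0") (auto simp: plucker_def)
  have "card {w \<in> E1 - E. decomposable w} \<le> card {x \<in> E1 - E. plucker x i j k l = 0}"
    by (rule card_mono) (auto simp: decomposable_iff_plucker)
  also have "\<dots> \<le> card {e \<in> E. plucker_polar z e i j k l \<noteq> 0}"
    unfolding E1_eq
    by (rule card_quadric_zeros_outside[OF E_sub \<open>z \<notin> E\<close>])
      (simp_all add: plucker_scale_add Qz QE)
  also have "\<dots> \<le> CARD('a) ^ (r - 1) * (CARD('a) - 1)"
    unfolding dimE[symmetric]
    by (rule card_nonvanishing_linear_functional[OF E_sub])
      (simp_all add: plucker_polar_add plucker_polar_scale)
  finally show ?thesis .
qed

end
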